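(* Suppose a three-link protocol given by maps $s_{AB},s_{AC},s_{BC}$ (and decision functions) solves MEQ-AD$(3,M)$. Then the map $x\mapsto (s_{AB}(x),s_{AC}(x))$ on $\{1,\dots,M\}$ is injective; equivalently, in the associated bipartite graph $G(U,V,E)$ each edge corresponds to exactly one input value. Hence $|E|=M$ and $|U|\cdot|V|\ge M$.
   Context: Three nodes $A,B,C$ hold inputs $x_A,x_B,x_C\in\{1,\dots,M\}$. A three-link protocol is given by maps $s_{AB},s_{AC},s_{BC}$ from $\{1,\dots,M\}$ to finite sets: $A$ sends $s_{AB}(x_A)$ to $B$ and $s_{AC}(x_A)$ to $C$, and $B$ sends $s_{BC}(x_B)$ to $C$ (private point-to-point links). Each node outputs a bit: $EQ_A$ is a function of $x_A$, $EQ_B$ a function of $(x_B,s_{AB}(x_A))$, and $EQ_C$ a function of $(x_C,s_{AC}(x_A),s_{BC}(x_B))$. The protocol solves MEQ-AD$(3,M)$ if for all inputs, $EQ_A=EQ_B=EQ_C=0$ holds iff $x_A=x_B=x_C$. Its complexity is $\log_2(|s_{AB}|\cdot|s_{AC}|\cdot|s_{BC}|)$, where $|s_{ij}|$ is the size of the range of $s_{ij}$. The associated simple bipartite graph $G(U,V,E)$ has vertex sets $U=\{U_i: i \text{ in the range of } s_{AB}\}$, $V=\{V_j: j\text{ in the range of } s_{AC}\}$, and an edge $(U_i,V_j)\in E$ iff $i=s_{AB}(x)$ and $j=s_{AC}(x)$ for some $x$; the edge $(U_{s_{AB}(x)},V_{s_{AC}(x)})$ is said to correspond to $x$. *)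

theory Defs
  imports Main
begin

text \<open>Inputs range over {1..M}. Output bits are modelled as bool, with False = 0 and True = 1.
  Messages take values in arbitrary types; the range of a map is its image on {1..M}
  (automatically finite).\<close>

definition solves_MEQ_AD3 ::
  "nat \<Rightarrow> (nat \<Rightarrow> 'a) \<Rightarrow> (nat \<Rightarrow> 'b) \<Rightarrow> (nat \<Rightarrow> 'c) \<Rightarrow>
   (nat \<Rightarrow> bool) \<Rightarrow> (nat \<Rightarrow> 'a \<Rightarrow> bool) \<Rightarrow> (nat \<Rightarrow> 'b \<Rightarrow> 'c \<Rightarrow> bool) \<Rightarrow> bool" where
  "solves_MEQ_AD3 M sAB sAC sBC EQA EQB EQC \<longleftrightarrow>
     (\<forall>xA\<in>{1..M}. \<forall>xB\<in>{1..M}. \<forall>xC\<in>{1..M}.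
        ((\<not> EQA xA \<and> \<not> EQB xB (sAB xA) \<and> \<not> EQC xC (sAC xA) (sBC xB))
          \<longleftrightarrow> (xA = xB \<and> xB = xC)))"

definition graph_U :: "nat \<Rightarrow> (nat \<Rightarrow> 'a) \<Rightarrow> 'a set" where
  "graph_U M sAB = sAB ` {1..M}"

definition graph_V :: "nat \<Rightarrow> (nat \<Rightarrow> 'b) \<Rightarrow> 'b set" where
  "graph_V M sAC = sAC ` {1..M}"

definition graph_E :: "nat \<Rightarrow> (nat \<Rightarrow> 'a) \<Rightarrow> (nat \<Rightarrow> 'b) \<Rightarrow> ('a \<times> 'b) set" where
  "graph_E M sAB sAC = (\<lambda>x. (sAB x, sAC x)) ` {1..M}"

end

theory Submission
  imports Defs
begin

text \<open>If two inputs x, y had the same messages from A, then on input (x, y, y) node B and C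
  would see exactly what they see on (y, y, y), where they output 0, and A outputs 0 as on
  (x, x, x); so all nodes accept (x, y, y), forcing x = y. The counting statements follow
  since the edge set is the injective image of {1..M} inside U \<times> V.\<close>

lemma solves_MEQ_AD3_inj_on_messages_of_A:
  assumes "solves_MEQ_AD3 M sAB sAC sBC EQA EQB EQC"
  shows "inj_on (\<lambda>x. (sAB x, sAC x)) {1..M}"
proof (rule inj_onI)
  fix x y
  assume x: "x \<in> {1..M}" and y: "y \<in> {1..M}" and same: "(sAB x, sAC x) = (sAB y, sAC y)"
  have accept: "\<And>xA xB xC. \<lbrakk>xA \<in> {1..M}; xB \<in> {1..M}; xC \<in> {1..M}\<rbrakk> \<Longrightarrow>
      \<not> EQA xA \<and> \<not> EQB xB (sAB xA) \<and> \<not> EQC xC (sAC xA) (sBC xB) \<longleftrightarrow> xA = xB \<and> xB = xC"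
    using assms unfolding solves_MEQ_AD3_def by blast
  have "\<not> EQA x" using accept[OF x x x] by simp
  moreover have "\<not> EQB y (sAB y) \<and> \<not> EQC y (sAC y) (sBC y)" using accept[OF y y y] by simp
  ultimately show "x = y" using accept[OF x y y] same by simp
qed

lemma graph_E_subset_graph_U_times_graph_V:
  "graph_E M sAB sAC \<subseteq> graph_U M sAB \<times> graph_V M sAC"
  unfolding graph_E_def graph_U_def graph_V_def by auto

lemma card_graph_E_le_card_graph_U_mult_card_graph_V:
  "card (graph_E M sAB sAC) \<le> card (graph_U M sAB) * card (graph_V M sAC)"
proof -
  have "finite (graph_U M sAB \<times> graph_V M sAC)"
    by (simp add: graph_U_def graph_V_def)
  then show ?thesis
    using card_mono[OF _ graph_E_subset_graph_U_times_graph_V] by (simp add: card_cartesian_product)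
qed

lemma card_graph_E_eq:
  assumes "inj_on (\<lambda>x. (sAB x, sAC x)) {1..M}"
  shows "card (graph_E M sAB sAC) = M"
  unfolding graph_E_def using card_image[OF assms] by simp

lemma graph_E_edge_corresponds_to_unique_input:
  assumes "inj_on (\<lambda>x. (sAB x, sAC x)) {1..M}" and "e \<in> graph_E M sAB sAC"
  shows "\<exists>!x. x \<in> {1..M} \<and> e = (sAB x, sAC x)"
  using assms unfolding graph_E_def inj_on_def by blast

theorem lemma3:
  fixes M :: nat
    and sAB :: "nat \<Rightarrow> 'a" and sAC :: "nat \<Rightarrow> 'b" and sBC :: "nat \<Rightarrow> 'c"
    and EQA :: "nat \<Rightarrow> bool" and EQB :: "nat \<Rightarrow> 'a \<Rightarrow> bool" and EQC :: "nat \<Rightarrow> 'b \<Rightarrow> 'c \<Rightarrow> bool"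
  assumes "solves_MEQ_AD3 M sAB sAC sBC EQA EQB EQC"
  shows "inj_on (\<lambda>x. (sAB x, sAC x)) {1..M}
    \<and> (\<forall>e\<in>graph_E M sAB sAC. \<exists>!x. x \<in> {1..M} \<and> e = (sAB x, sAC x))
    \<and> card (graph_E M sAB sAC) = M
    \<and> card (graph_U M sAB) * card (graph_V M sAC) \<ge> M"
proof -
  have inj: "inj_on (\<lambda>x. (sAB x, sAC x)) {1..M}"
    using solves_MEQ_AD3_inj_on_messages_of_A[OF assms] .
  have card_E: "card (graph_E M sAB sAC) = M"
    using card_graph_E_eq[OF inj] .
  show ?thesis
    using inj card_E graph_E_edge_corresponds_to_unique_input[OF inj]
      card_graph_E_le_card_graph_U_mult_card_graph_V[of M sAB sAC]
    by auto
qed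

end
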